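(* Consider the stationary M/M/1/K queue with arrival rate $\lambda>0$, service rate $\mu>0$, $\rho=\lambda/\mu$, capacity $K\ge1$, queue length process $\{Q(t)\}$ and departure process $\{D(t)\}$. Then $$\lim_{t\to\infty}\mathrm{Cov}\big(D(t),Q(t)\big)=\begin{cases}\rho^{K+1}\dfrac{K^2(\rho-1)^2(1+3\rho^{K+1})-2\rho(\rho^K-1)(-2+\rho+\rho^{K+2})+K(\rho-1)(-1+3\rho-7\rho^{K+1}+5\rho^{K+2})}{2(\rho-1)^2(\rho^{K+1}-1)^3}, & \rho\neq1,\\[1em] -\dfrac{K(K+2)}{24}, & \rho=1.\end{cases}$$
   Context: The M/M/1/K queue: a single server, Poisson arrivals at rate $\lambda$, exponential service with rate $\mu$, and at most $K$ customers in the system (arrivals finding $K$ customers are lost). $Q(t)\in\{0,\dots,K\}$ is the number in system, a birth–death chain with up-rate $\lambda$ and down-rate $\mu$; "stationary" means $Q(0)$ has the stationary distribution $\pi_i=\frac{1-\rho}{1-\rho^{K+1}}\rho^i$ ($\rho\ne1$), $\pi_i=\frac1{K+1}$ ($\rho=1$). $D(t)$ is the number of service completions in $[0,t]$. *)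

theory Defs
  imports Complex_Main
begin

definition mm1k_pi :: "real \<Rightarrow> nat \<Rightarrow> nat \<Rightarrow> real" where
  "mm1k_pi rho K i =
     (if rho = 1 then 1 / real (K + 1)
      else (1 - rho) / (1 - rho ^ (K + 1)) * rho ^ i)"

text \<open>Right-hand side of the Kolmogorov forward equations for the joint law
  p t i n = P(Q(t) = i, D(t) = n) of the Markov process (Q, D):
  arrivals (rate lam, blocked at K) move i to i+1; services (rate mu, only
  when i > 0) move i to i-1 and n to n+1.\<close>
definition mm1k_rhs ::
  "real \<Rightarrow> real \<Rightarrow> nat \<Rightarrow> (real \<Rightarrow> nat \<Rightarrow> nat \<Rightarrow> real) \<Rightarrow> real \<Rightarrow> nat \<Rightarrow> nat \<Rightarrow> real" where
  "mm1k_rhs lam mu K p t i n =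
     (if 1 \<le> i then lam * p t (i - 1) n else 0)
   + (if i + 1 \<le> K \<and> 1 \<le> n then mu * p t (i + 1) (n - 1) else 0)
   - ((if i < K then lam else 0) + (if 0 < i then mu else 0)) * p t i n"

definition mm1k_ED :: "nat \<Rightarrow> (real \<Rightarrow> nat \<Rightarrow> nat \<Rightarrow> real) \<Rightarrow> real \<Rightarrow> real" where
  "mm1k_ED K p t = (\<Sum>n. \<Sum>i\<le>K. real n * p t i n)"

definition mm1k_EQ :: "nat \<Rightarrow> (real \<Rightarrow> nat \<Rightarrow> nat \<Rightarrow> real) \<Rightarrow> real \<Rightarrow> real" where
  "mm1k_EQ K p t = (\<Sum>n. \<Sum>i\<le>K. real i * p t i n)"

definition mm1k_EDQ :: "nat \<Rightarrow> (real \<Rightarrow> nat \<Rightarrow> nat \<Rightarrow> real) \<Rightarrow> real \<Rightarrow> real" where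
  "mm1k_EDQ K p t = (\<Sum>n. \<Sum>i\<le>K. real n * real i * p t i n)"

definition mm1k_cov :: "nat \<Rightarrow> (real \<Rightarrow> nat \<Rightarrow> nat \<Rightarrow> real) \<Rightarrow> real \<Rightarrow> real" where
  "mm1k_cov K p t = mm1k_EDQ K p t - mm1k_ED K p t * mm1k_EQ K p t"

definition mm1k_cov_limit :: "real \<Rightarrow> nat \<Rightarrow> real" where
  "mm1k_cov_limit rho K =
    (if rho = 1 then - (real K * (real K + 2) / 24)
     else rho ^ (K + 1) *
       (real K ^ 2 * (rho - 1) ^ 2 * (1 + 3 * rho ^ (K + 1))
        - 2 * rho * (rho ^ K - 1) * (-2 + rho + rho ^ (K + 2))
        + real K * (rho - 1) * (-1 + 3 * rho - 7 * rho ^ (K + 1) + 5 * rho ^ (K + 2)))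
       / (2 * (rho - 1) ^ 2 * (rho ^ (K + 1) - 1) ^ 3))"

end

theory Submission
  imports Defs "HOL-Analysis.Analysis" "HOL-Real_Asymp.Real_Asymp"
begin

text \<open>
  Write p_n(t) for the vector (p t i n), i = 0, ..., K. The forward equations read
  p_n' = D0 p_n + D1 p_(n-1), where D1 collects the service transitions (which increase D)
  and D0 all other ones; G = D0 + D1 is the forward operator of Q alone.

  An energy estimate bounds p_n(t) by a Poisson tail in n, uniformly for bounded t, so the
  marginal a(t) = \<Sum>_n p_n(t) and the first moment m(t) = \<Sum>_n n p_n(t) can be differentiated
  termwise: a' = G a and m' = G m + D1 a. Uniqueness for a' = G a gives a(t) = \<pi>. With the
  throughput \<theta> = \<mu> (1 - \<pi>_0) and a solution h of the Poisson equation G h = \<theta> \<pi> - D1 \<pi>,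
  the vector z = m - (\<theta> t - \<Sum> h) \<pi> - h solves z' = G z and has zero sum. Detailed balance
  turns \<Sum> z_i (G z)_i / \<pi>_i into a Dirichlet form, and a Poincare inequality on the path
  0, ..., K makes \<Sum> z_i^2 / \<pi>_i decay exponentially. Hence
  Cov(D(t), Q(t)) = \<Sum> i m_i - (\<Sum> m_i) (\<Sum> i \<pi>_i) converges to
  \<Sum> i h_i - (\<Sum> h_i) (\<Sum> i \<pi>_i), which is evaluated in closed form.
\<close>

section \<open>Derivatives and series on the half-line\<close>

lemma increment_le_of_deriv_le:
  fixes f g f' g' :: "real \<Rightarrow> real"
  assumes "a \<le> b"
    and f: "\<And>t. a \<le> t \<Longrightarrow> t \<le> b \<Longrightarrow> (f has_real_derivative f' t) (at t within {a..})"
    and g: "\<And>t. a \<le> t \<Longrightarrow> t \<le> b \<Longrightarrow> (g has_real_derivative g' t) (at t within {a..})"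
    and le: "\<And>t. a \<le> t \<Longrightarrow> t \<le> b \<Longrightarrow> f' t \<le> g' t"
  shows "f b - f a \<le> g b - g a"
proof -
  have d: "((\<lambda>t. g t - f t) has_real_derivative g' t - f' t) (at t within {a..b})"
    if "a \<le> t" "t \<le> b" for t
    using DERIV_diff[OF g f, OF that that] by (rule DERIV_subset) auto
  have "g a - f a \<le> g b - f b"
  proof (rule DERIV_nonneg_imp_increasing_open[OF \<open>a \<le> b\<close>])
    show "continuous_on {a..b} (\<lambda>t. g t - f t)"
      using d by (intro DERIV_continuous_on) auto
    fix x assume "a < x" "x < b"
    then show "\<exists>y. ((\<lambda>t. g t - f t) has_real_derivative y) (at x) \<and> 0 \<le> y"
      using d[of x] le[of x] at_within_Icc_at[of a x b] by auto
  qed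
  then show ?thesis by simp
qed

lemma gronwall_deriv_le:
  fixes f f' :: "real \<Rightarrow> real"
  assumes f: "\<And>t. 0 \<le> t \<Longrightarrow> (f has_real_derivative f' t) (at t within {0..})"
    and le: "\<And>t. 0 \<le> t \<Longrightarrow> f' t \<le> c * f t"
    and "0 \<le> t"
  shows "f t \<le> exp (c * t) * f 0"
proof -
  have "exp (- c * t) * f t - exp (- c * 0) * f 0 \<le> 0 - 0"
  proof (rule increment_le_of_deriv_le[OF \<open>0 \<le> t\<close>])
    fix s :: real assume "0 \<le> s"
    show "((\<lambda>s. exp (- c * s) * f s) has_real_derivative exp (- c * s) * (f' s - c * f s))
        (at s within {0..})"
      by (rule derivative_eq_intros f[OF \<open>0 \<le> s\<close>] refl | simp add: algebra_simps)+
    show "exp (- c * s) * (f' s - c * f s) \<le> 0"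
      using le[OF \<open>0 \<le> s\<close>] by (simp add: mult_nonneg_nonpos)
  qed auto
  then show ?thesis by (simp add: exp_minus field_simps)
qed

lemma termwise_has_real_derivative_suminf:
  fixes f f' :: "nat \<Rightarrow> real \<Rightarrow> real"
  assumes deriv: "\<And>n t. 0 \<le> t \<Longrightarrow> (f n has_real_derivative f' n t) (at t within {0..})"
    and summable_M: "\<And>T. 0 \<le> T \<Longrightarrow> summable (M T)"
    and majorant: "\<And>T n t. 0 \<le> t \<Longrightarrow> t \<le> T \<Longrightarrow> \<bar>f' n t\<bar> \<le> M T n"
    and summable0: "summable (\<lambda>n. f n 0)" and t: "0 \<le> t"
  shows "summable (\<lambda>n. f n t)"
    and "((\<lambda>t. \<Sum>n. f n t) has_real_derivative (\<Sum>n. f' n t)) (at t within {0..})"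
proof -
  define S where "S = {0..t + 1}"
  have u: "uniform_limit S (\<lambda>n s. \<Sum>i<n. f' i s) (\<lambda>s. \<Sum>i. f' i s) sequentially"
    by (rule Weierstrass_m_test[OF _ summable_M[of "t + 1"]]) (use majorant t in \<open>auto simp: S_def\<close>)
  have d: "(f n has_real_derivative f' n s) (at s within S)" if "s \<in> S" for n s
    using deriv[of s n] that by (auto simp: S_def intro: DERIV_subset)
  have "\<exists>g. \<forall>s\<in>S. (\<lambda>n. f n s) sums g s \<and> (g has_real_derivative (\<Sum>i. f' i s)) (at s within S)"
    by (rule has_field_derivative_series[OF _ d u _ summable0]) (use t in \<open>auto simp: S_def\<close>)
  then obtain g where g: "\<And>s. s \<in> S \<Longrightarrow>
      (\<lambda>n. f n s) sums g s \<and> (g has_real_derivative (\<Sum>i. f' i s)) (at s within S)"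
    by blast
  have "t \<in> S" using t by (simp add: S_def)
  then show "summable (\<lambda>n. f n t)" using g sums_summable by blast
  have "(g has_real_derivative (\<Sum>n. f' n t)) (at t within S)" using g \<open>t \<in> S\<close> by blast
  then have "((\<lambda>s. \<Sum>n. f n s) has_real_derivative (\<Sum>n. f' n t)) (at t within S)"
    by (rule has_field_derivative_transform_within[OF _ zero_less_one \<open>t \<in> S\<close>])
      (use g sums_unique in blast)
  moreover have "at t within S = at t within {0..}"
    by (rule at_within_nhd[of _ "{..<t + 1}"]) (auto simp: S_def)
  ultimately show "((\<lambda>s. \<Sum>n. f n s) has_real_derivative (\<Sum>n. f' n t)) (at t within {0..})"
    by simp
qed

lemma sums_delay:
  fixes f :: "nat \<Rightarrow> real"
  assumes "f sums s"
  shows "(\<lambda>n. if 1 \<le> n then f (n - 1) else 0) sums s"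
proof -
  have "(\<lambda>n. (\<lambda>n. if 1 \<le> n then f (n - 1) else 0) (Suc n)) sums s"
    using assms by simp
  then show ?thesis by (subst (asm) sums_Suc_iff) simp
qed

lemma sums_of_nat_mult_delay:
  fixes f :: "nat \<Rightarrow> real"
  assumes "(\<lambda>n. real n * f n) sums r" and "f sums s"
  shows "(\<lambda>n. real n * (if 1 \<le> n then f (n - 1) else 0)) sums (r + s)"
proof -
  have "(\<lambda>n. (\<lambda>n. real n * (if 1 \<le> n then f (n - 1) else 0)) (Suc n)) sums (r + s)"
    using sums_add[OF assms] by (simp add: algebra_simps)
  then show ?thesis by (subst (asm) sums_Suc_iff) simp
qed

lemma abs_le_AM_GM:
  fixes x c :: real
  assumes "0 < c"
  shows "\<bar>x\<bar> \<le> (c * x\<^sup>2 + 1 / c) / 2"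
proof -
  have "0 \<le> (c * \<bar>x\<bar> - 1)\<^sup>2 / c" using assms by simp
  also have "(c * \<bar>x\<bar> - 1)\<^sup>2 / c = c * x\<^sup>2 + 1 / c - 2 * \<bar>x\<bar>"
    using assms by (simp add: power2_eq_square field_simps)
  finally show ?thesis by simp
qed

lemma summable_Suc_times_exp_majorant:
  fixes A x :: real
  assumes "0 \<le> A" and "0 \<le> x"
  shows "summable (\<lambda>n. real (Suc n) * ((A * x ^ n / fact n + (1 / 4) ^ n) / 2))"
proof (rule summable_comparison_test')
  show "summable (\<lambda>n. (A * (inverse (fact n) * (2 * x) ^ n) + (1 / 2) ^ n) / 2)"
    by (intro summable_divide summable_add summable_mult summable_exp summable_geometric) auto
  fix n :: nat
  have two_pow: "real (Suc n) \<le> 2 ^ n"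
    by (induction n) auto
  have "real (Suc n) * (A * x ^ n / fact n) \<le> 2 ^ n * (A * x ^ n / fact n)"
    using assms by (intro mult_right_mono two_pow) auto
  also have "\<dots> = A * (inverse (fact n) * (2 * x) ^ n)"
    by (simp add: power_mult_distrib divide_inverse mult_ac)
  finally have exp_part: "real (Suc n) * (A * x ^ n / fact n) \<le> A * (inverse (fact n) * (2 * x) ^ n)" .
  have "real (Suc n) * (1 / 4) ^ n \<le> 2 ^ n * (1 / 4 :: real) ^ n"
    by (intro mult_right_mono two_pow) auto
  also have "\<dots> = (1 / 2) ^ n"
    by (simp add: power_mult_distrib[symmetric])
  finally have geometric_part: "real (Suc n) * (1 / 4) ^ n \<le> (1 / 2 :: real) ^ n" .
  have "norm (real (Suc n) * ((A * x ^ n / fact n + (1 / 4) ^ n) / 2))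
      = (real (Suc n) * (A * x ^ n / fact n) + real (Suc n) * (1 / 4) ^ n) / 2"
    using assms by (simp add: ring_distribs)
  also have "\<dots> \<le> (A * (inverse (fact n) * (2 * x) ^ n) + (1 / 2) ^ n) / 2"
    by (intro divide_right_mono add_mono exp_part geometric_part) simp
  finally show "norm (real (Suc n) * ((A * x ^ n / fact n + (1 / 4) ^ n) / 2))
      \<le> (A * (inverse (fact n) * (2 * x) ^ n) + (1 / 2) ^ n) / 2" .
qed

section \<open>The forward operator of the M/M/1/K queue\<close>

text \<open>
  Transposed rate matrices of the chain (Q, D), acting on distributions over the queue length:
  in the notation of Markovian arrival processes, D1 holds the service transitions, which
  increase D, and D0 all other transitions, including the diagonal.
\<close>

definition mm1k_D0 :: "real \<Rightarrow> real \<Rightarrow> nat \<Rightarrow> (nat \<Rightarrow> real) \<Rightarrow> nat \<Rightarrow> real" where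
  "mm1k_D0 lam mu K v i = (if 1 \<le> i then lam * v (i - 1) else 0)
     - ((if i < K then lam else 0) + (if 0 < i then mu else 0)) * v i"

definition mm1k_D1 :: "real \<Rightarrow> nat \<Rightarrow> (nat \<Rightarrow> real) \<Rightarrow> nat \<Rightarrow> real" where
  "mm1k_D1 mu K v i = (if i + 1 \<le> K then mu * v (i + 1) else 0)"

definition mm1k_gen :: "real \<Rightarrow> real \<Rightarrow> nat \<Rightarrow> (nat \<Rightarrow> real) \<Rightarrow> nat \<Rightarrow> real" where
  "mm1k_gen lam mu K v i = mm1k_D0 lam mu K v i + mm1k_D1 mu K v i"

definition mm1k_flow :: "real \<Rightarrow> real \<Rightarrow> (nat \<Rightarrow> real) \<Rightarrow> nat \<Rightarrow> real" where
  "mm1k_flow lam mu v k = lam * v k - mu * v (Suc k)"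

lemma mm1k_rhs_eq_D0_D1:
  "mm1k_rhs lam mu K p t i n = mm1k_D0 lam mu K (\<lambda>j. p t j n) i
     + (if 1 \<le> n then mm1k_D1 mu K (\<lambda>j. p t j (n - 1)) i else 0)"
  by (simp add: mm1k_rhs_def mm1k_D0_def mm1k_D1_def)

lemma mm1k_gen_eq_flow:
  assumes "i \<le> K"
  shows "mm1k_gen lam mu K v i
    = (if 1 \<le> i then mm1k_flow lam mu v (i - 1) else 0) - (if i < K then mm1k_flow lam mu v i else 0)"
  using assms by (cases i) (auto simp: mm1k_gen_def mm1k_D0_def mm1k_D1_def mm1k_flow_def algebra_simps)

lemma summation_by_parts_path:
  fixes u J :: "nat \<Rightarrow> real"
  shows "(\<Sum>i\<le>K. u i * ((if 1 \<le> i then J (i - 1) else 0) - (if i < K then J i else 0)))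
    = (\<Sum>k<K. (u (Suc k) - u k) * J k)"
proof -
  have "(\<Sum>i\<le>K. u i * (if 1 \<le> i then J (i - 1) else 0)) = (\<Sum>k<K. u (Suc k) * J k)"
    by (induction K) auto
  moreover have "(\<Sum>i\<le>K. u i * (if i < K then J i else 0)) = (\<Sum>k<K. u k * J k)"
    by (rule sum.mono_neutral_cong_right) auto
  ultimately show ?thesis
    by (simp add: right_diff_distrib sum_subtractf left_diff_distrib)
qed

lemma sum_mm1k_gen: "(\<Sum>i\<le>K. mm1k_gen lam mu K v i) = 0"
  using summation_by_parts_path[where u="\<lambda>_. 1" and J="mm1k_flow lam mu v" and K=K]
  by (simp add: mm1k_gen_eq_flow)

lemma mm1k_gen_diff: "mm1k_gen lam mu K (\<lambda>j. x j - y j) i = mm1k_gen lam mu K x i - mm1k_gen lam mu K y i"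
  and mm1k_gen_mult: "mm1k_gen lam mu K (\<lambda>j. c * x j) i = c * mm1k_gen lam mu K x i"
  by (simp_all add: mm1k_gen_def mm1k_D0_def mm1k_D1_def algebra_simps)

lemma mm1k_D0_scale: "mm1k_D0 lam mu K (\<lambda>j. c * v j) i = c * mm1k_D0 lam mu K v i"
  and mm1k_D1_scale: "mm1k_D1 mu K (\<lambda>j. c * v j) i = c * mm1k_D1 mu K v i"
  by (simp_all add: mm1k_D0_def mm1k_D1_def algebra_simps)

lemma mm1k_energy_ineq:
  assumes lam: "0 \<le> lam" and mu: "0 \<le> mu"
  shows "2 * (\<Sum>i\<le>K. v i * (mm1k_D0 lam mu K v i + mm1k_D1 mu K w i))
     \<le> (2 * lam + mu) * (\<Sum>i\<le>K. (v i)\<^sup>2) + mu * (\<Sum>i\<le>K. (w i)\<^sup>2)"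
proof -
  have pointwise: "2 * (v i * (mm1k_D0 lam mu K v i + mm1k_D1 mu K w i))
      \<le> (lam + mu) * (v i)\<^sup>2 + lam * (if 1 \<le> i then (v (i - 1))\<^sup>2 else 0)
        + mu * (if i + 1 \<le> K then (w (i + 1))\<^sup>2 else 0)" for i
  proof -
    have "lam * (2 * v i * v (i - 1)) \<le> lam * ((v i)\<^sup>2 + (v (i - 1))\<^sup>2)"
      and "mu * (2 * v i * w (i + 1)) \<le> mu * ((v i)\<^sup>2 + (w (i + 1))\<^sup>2)"
      using lam mu sum_squares_bound by (auto intro: mult_left_mono)
    moreover have "0 \<le> ((if i < K then lam else 0) + (if 0 < i then mu else 0)) * (v i)\<^sup>2"
      and "0 \<le> lam * (v i)\<^sup>2" "0 \<le> mu * (v i)\<^sup>2"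
      using lam mu by auto
    ultimately show ?thesis
      by (auto simp: mm1k_D0_def mm1k_D1_def algebra_simps power2_eq_square)
  qed
  have shift_down: "(\<Sum>i\<le>K. (if 1 \<le> i then (v (i - 1))\<^sup>2 else 0)) \<le> (\<Sum>i\<le>K. (v i)\<^sup>2)"
  proof -
    have "(\<Sum>i\<le>K. (if 1 \<le> i then (v (i - 1))\<^sup>2 else 0)) = (\<Sum>i<K. (v i)\<^sup>2)"
      by (induction K) auto
    also have "\<dots> \<le> (\<Sum>i\<le>K. (v i)\<^sup>2)" by (rule sum_mono2) auto
    finally show ?thesis .
  qed
  have shift_up: "(\<Sum>i\<le>K. (if i + 1 \<le> K then (w (i + 1))\<^sup>2 else 0)) \<le> (\<Sum>i\<le>K. (w i)\<^sup>2)"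
  proof -
    have "(\<Sum>i\<le>K. (if i + 1 \<le> K then (w (i + 1))\<^sup>2 else 0)) = (\<Sum>i<K. (w (Suc i))\<^sup>2)"
      by (rule sum.mono_neutral_cong_right) auto
    also have "\<dots> \<le> (w 0)\<^sup>2 + (\<Sum>i<K. (w (Suc i))\<^sup>2)" by simp
    also have "\<dots> = (\<Sum>i\<le>K. (w i)\<^sup>2)" by (simp add: sum.atMost_shift)
    finally show ?thesis .
  qed
  have "2 * (\<Sum>i\<le>K. v i * (mm1k_D0 lam mu K v i + mm1k_D1 mu K w i))
      \<le> (\<Sum>i\<le>K. (lam + mu) * (v i)\<^sup>2 + lam * (if 1 \<le> i then (v (i - 1))\<^sup>2 else 0)
          + mu * (if i + 1 \<le> K then (w (i + 1))\<^sup>2 else 0))"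
    unfolding sum_distrib_left by (rule sum_mono) (rule pointwise)
  also have "\<dots> \<le> (lam + mu) * (\<Sum>i\<le>K. (v i)\<^sup>2) + lam * (\<Sum>i\<le>K. (v i)\<^sup>2) + mu * (\<Sum>i\<le>K. (w i)\<^sup>2)"
    using mult_left_mono[OF shift_down lam] mult_left_mono[OF shift_up mu]
    by (simp add: sum.distrib sum_distrib_left[symmetric])
  finally show ?thesis by (simp add: algebra_simps)
qed

lemma mm1k_D0_sums:
  assumes "\<And>j. j \<le> K \<Longrightarrow> (\<lambda>n. v n j) sums s j" and "i \<le> K"
  shows "(\<lambda>n. mm1k_D0 lam mu K (v n) i) sums mm1k_D0 lam mu K s i"
proof -
  have "(\<lambda>n. if 1 \<le> i then lam * v n (i - 1) else 0) sums (if 1 \<le> i then lam * s (i - 1) else 0)"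
    using assms by (cases "1 \<le> i") (auto intro: sums_mult)
  moreover have "(\<lambda>n. c * v n i) sums (c * s i)" for c
    using assms by (intro sums_mult) auto
  ultimately show ?thesis
    unfolding mm1k_D0_def by (intro sums_diff)
qed

lemma mm1k_D1_sums:
  assumes "\<And>j. j \<le> K \<Longrightarrow> (\<lambda>n. v n j) sums s j"
  shows "(\<lambda>n. mm1k_D1 mu K (v n) i) sums mm1k_D1 mu K s i"
  unfolding mm1k_D1_def using assms by (auto intro!: sums_mult)

section \<open>The stationary distribution\<close>

lemma mm1k_normalizer_pos:
  fixes r :: real
  assumes "0 < r" and "r \<noteq> 1"
  shows "0 < (1 - r) / (1 - r ^ Suc K)"
proof (cases "r < 1")
  case True
  then have "r ^ Suc K < 1" using assms by (intro power_Suc_less_one) auto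
  with True show ?thesis by (intro divide_pos_pos) auto
next
  case False
  then have "1 < r" using assms by simp
  then have "1 < r ^ Suc K" by (intro one_less_power) auto
  with \<open>1 < r\<close> show ?thesis by (intro divide_neg_neg) auto
qed

lemma power_Suc_neq_one:
  fixes r :: real
  assumes "0 < r" and "r \<noteq> 1"
  shows "r ^ Suc K \<noteq> 1"
proof
  assume "r ^ Suc K = 1"
  then show False using mm1k_normalizer_pos[OF assms, of K] by simp
qed

lemma mm1k_pi_pos:
  assumes "0 < r"
  shows "0 < mm1k_pi r K i"
proof (cases "r = 1")
  case False
  then show ?thesis
    using mult_pos_pos[OF mm1k_normalizer_pos[OF assms False] zero_less_power[OF assms]]
    by (simp add: mm1k_pi_def)
qed (simp add: mm1k_pi_def)

lemma sum_mm1k_pi: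
  assumes "0 < r"
  shows "(\<Sum>i\<le>K. mm1k_pi r K i) = 1"
proof (cases "r = 1")
  case False
  have "(\<Sum>i\<le>K. mm1k_pi r K i) = (1 - r) / (1 - r ^ Suc K) * (\<Sum>i\<le>K. r ^ i)"
    using False by (simp add: mm1k_pi_def sum_distrib_left)
  also have "\<dots> = 1"
    using False power_Suc_neq_one[OF assms False, of K] by (simp add: sum_gp0)
  finally show ?thesis .
qed (simp add: mm1k_pi_def)

lemma mm1k_pi_balance:
  assumes "mu \<noteq> 0"
  shows "lam * mm1k_pi (lam / mu) K i = mu * mm1k_pi (lam / mu) K (Suc i)"
  using assms by (auto simp: mm1k_pi_def)

lemma mm1k_gen_pi:
  assumes "mu \<noteq> 0" and "i \<le> K"
  shows "mm1k_gen lam mu K (mm1k_pi (lam / mu) K) i = 0"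
  using assms by (simp add: mm1k_gen_eq_flow mm1k_flow_def mm1k_pi_balance)

section \<open>Solutions of the forward equation\<close>

lemma mm1k_gen_ode_zero:
  assumes lam: "0 \<le> lam" and mu: "0 \<le> mu"
    and deriv: "\<And>t i. 0 \<le> t \<Longrightarrow> i \<le> K \<Longrightarrow>
      ((\<lambda>t. y i t) has_real_derivative mm1k_gen lam mu K (\<lambda>j. y j t) i) (at t within {0..})"
    and init: "\<And>i. i \<le> K \<Longrightarrow> y i 0 = 0"
    and "0 \<le> t" and "i \<le> K"
  shows "y i t = 0"
proof -
  define D where "D t = (\<Sum>j\<le>K. (y j t)\<^sup>2)" for t
  have "D t \<le> exp ((2 * lam + 2 * mu) * t) * D 0"
  proof (rule gronwall_deriv_le[OF _ _ \<open>0 \<le> t\<close>])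
    fix s :: real assume "0 \<le> s"
    show "(D has_real_derivative 2 * (\<Sum>j\<le>K. y j s * mm1k_gen lam mu K (\<lambda>j. y j s) j))
        (at s within {0..})"
      unfolding D_def using \<open>0 \<le> s\<close>
      by (auto intro!: derivative_eq_intros deriv simp: sum_distrib_left mult_ac)
    show "2 * (\<Sum>j\<le>K. y j s * mm1k_gen lam mu K (\<lambda>j. y j s) j) \<le> (2 * lam + 2 * mu) * D s"
      using mm1k_energy_ineq[OF lam mu, where K=K and v="\<lambda>j. y j s" and w="\<lambda>j. y j s"]
      by (simp add: mm1k_gen_def D_def algebra_simps)
  qed
  moreover have "D 0 = 0" by (simp add: D_def init)
  ultimately have "D t = 0" by (simp add: D_def antisym sum_nonneg)
  then show "y i t = 0"
    using \<open>i \<le> K\<close> by (simp add: D_def sum_nonneg_eq_0_iff)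
qed

lemma mm1k_gen_ode_sum_const:
  assumes deriv: "\<And>t i. 0 \<le> t \<Longrightarrow> i \<le> K \<Longrightarrow>
      ((\<lambda>t. z i t) has_real_derivative mm1k_gen lam mu K (\<lambda>j. z j t) i) (at t within {0..})"
    and "0 \<le> t"
  shows "(\<Sum>i\<le>K. z i t) = (\<Sum>i\<le>K. z i 0)"
proof -
  have "\<exists>c. \<forall>t\<in>{0..}. (\<Sum>i\<le>K. z i t) = c"
  proof (rule has_field_derivative_zero_constant)
    fix t :: real assume "t \<in> {0..}"
    then have "((\<lambda>t. \<Sum>i\<le>K. z i t) has_real_derivative (\<Sum>i\<le>K. mm1k_gen lam mu K (\<lambda>j. z j t) i))
        (at t within {0..})"
      by (intro DERIV_sum deriv) auto
    then show "((\<lambda>t. \<Sum>i\<le>K. z i t) has_field_derivative 0) (at t within {0..})"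
      by (simp add: sum_mm1k_gen)
  qed simp
  then show ?thesis using \<open>0 \<le> t\<close> by force
qed

lemma mm1k_gen_dirichlet_form:
  assumes pos: "\<And>i. 0 < s i" and bal: "\<And>i. lam * s i = mu * s (Suc i)"
  shows "(\<Sum>i\<le>K. z i / s i * mm1k_gen lam mu K z i)
    = - (\<Sum>k<K. lam * s k * (z (Suc k) / s (Suc k) - z k / s k)\<^sup>2)"
proof -
  define u where "u i = z i / s i" for i
  have z: "z i = s i * u i" for i
    using pos[of i] by (simp add: u_def)
  have flow: "mm1k_flow lam mu z k = - (lam * s k * (u (Suc k) - u k))" for k
  proof -
    have "mu * (s (Suc k) * u (Suc k)) = lam * s k * u (Suc k)"
      using bal[of k] by (metis mult.assoc)
    then show ?thesis
      unfolding mm1k_flow_def z by (simp only:) (simp add: algebra_simps)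
  qed
  have "(\<Sum>i\<le>K. u i * mm1k_gen lam mu K z i)
      = (\<Sum>i\<le>K. u i * ((if 1 \<le> i then mm1k_flow lam mu z (i - 1) else 0)
          - (if i < K then mm1k_flow lam mu z i else 0)))"
    by (intro sum.cong refl) (simp add: mm1k_gen_eq_flow)
  also have "\<dots> = (\<Sum>k<K. (u (Suc k) - u k) * mm1k_flow lam mu z k)"
    by (rule summation_by_parts_path)
  finally show ?thesis
    by (simp add: u_def flow power2_eq_square sum_negf[symmetric] mult_ac)
qed

lemma sq_diff_le_path_energy:
  fixes u :: "nat \<Rightarrow> real"
  assumes "i \<le> K" and "j \<le> K"
  shows "(u j - u i)\<^sup>2 \<le> real K * (\<Sum>k<K. (u (Suc k) - u k)\<^sup>2)"
proof -
  have ordered: "(u j - u i)\<^sup>2 \<le> real K * (\<Sum>k<K. (u (Suc k) - u k)\<^sup>2)"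
    if "i \<le> j" "j \<le> K" for i j
  proof -
    have "(u j - u i)\<^sup>2 = (\<Sum>k=i..<j. u (Suc k) - u k)\<^sup>2"
      using sum_Suc_diff'[OF \<open>i \<le> j\<close>, of u] by simp
    also have "\<dots> \<le> (\<Sum>k=i..<j. (u (Suc k) - u k)\<^sup>2) * card {i..<j}"
      by (rule sum_squared_le_sum_of_squares)
    also have "\<dots> \<le> (\<Sum>k<K. (u (Suc k) - u k)\<^sup>2) * real K"
      using that by (intro mult_mono sum_mono2 sum_nonneg) auto
    finally show ?thesis by (simp add: mult_ac)
  qed
  show ?thesis
    using ordered[of i j] ordered[of j i] assms by (cases "i \<le> j") (auto simp: power2_commute)
qed

lemma weighted_variance_le_path_energy:
  fixes u s :: "nat \<Rightarrow> real"
  assumes nonneg: "\<And>i. 0 \<le> s i" and total: "(\<Sum>i\<le>K. s i) = 1"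
    and centered: "(\<Sum>i\<le>K. s i * u i) = 0"
  shows "(\<Sum>i\<le>K. s i * (u i)\<^sup>2) \<le> real K * (\<Sum>k<K. (u (Suc k) - u k)\<^sup>2)"
proof -
  \<comment> \<open>A centered weighted mean minimises the weighted quadratic deviation, here from u 0.\<close>
  have "(\<Sum>i\<le>K. s i * (u i - u 0)\<^sup>2)
      = (\<Sum>i\<le>K. s i * (u i)\<^sup>2) - 2 * u 0 * (\<Sum>i\<le>K. s i * u i) + (u 0)\<^sup>2 * (\<Sum>i\<le>K. s i)"
    by (simp add: power2_diff algebra_simps sum.distrib sum_subtractf sum_distrib_left sum_distrib_right)
  then have "(\<Sum>i\<le>K. s i * (u i)\<^sup>2) \<le> (\<Sum>i\<le>K. s i * (u i - u 0)\<^sup>2)"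
    using centered total by simp
  also have "\<dots> \<le> (\<Sum>i\<le>K. s i * (real K * (\<Sum>k<K. (u (Suc k) - u k)\<^sup>2)))"
    using nonneg by (intro sum_mono mult_left_mono sq_diff_le_path_energy) auto
  also have "\<dots> = real K * (\<Sum>k<K. (u (Suc k) - u k)\<^sup>2)"
    using total by (simp add: sum_distrib_right[symmetric])
  finally show ?thesis .
qed

lemma mm1k_gen_spectral_gap:
  assumes lam: "0 \<le> lam"
    and pos: "\<And>i. 0 < s i" and bal: "\<And>i. lam * s i = mu * s (Suc i)"
    and total: "(\<Sum>i\<le>K. s i) = 1" and centered: "(\<Sum>i\<le>K. z i) = 0"
  shows "(\<Sum>i\<le>K. z i / s i * mm1k_gen lam mu K z i)
    \<le> - (lam * Min (s ` {..K}) / real K) * (\<Sum>i\<le>K. (z i)\<^sup>2 / s i)"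
proof -
  define u where "u i = z i / s i" for i
  define m where "m = Min (s ` {..K})"
  define energy where "energy = (\<Sum>k<K. (u (Suc k) - u k)\<^sup>2)"
  have m: "0 \<le> m" "\<And>k. k \<le> K \<Longrightarrow> m \<le> s k"
    using pos by (auto simp: m_def less_imp_le)
  have "(\<Sum>i\<le>K. (z i)\<^sup>2 / s i) = (\<Sum>i\<le>K. s i * (u i)\<^sup>2)"
    using pos by (intro sum.cong refl) (simp add: u_def power2_eq_square less_imp_neq[symmetric])
  also have "\<dots> \<le> real K * energy"
    unfolding energy_def
  proof (rule weighted_variance_le_path_energy)
    show "(\<Sum>i\<le>K. s i * u i) = 0"
      using pos centered by (simp add: u_def less_imp_neq[symmetric])
  qed (use pos total less_imp_le in auto)
  finally have poincare: "(\<Sum>i\<le>K. (z i)\<^sup>2 / s i) \<le> real K * energy" .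
  have "lam * m * energy \<le> (\<Sum>k<K. lam * s k * (u (Suc k) - u k)\<^sup>2)"
    unfolding energy_def sum_distrib_left using lam m by (intro sum_mono mult_right_mono mult_left_mono) auto
  moreover have "(\<Sum>i\<le>K. z i / s i * mm1k_gen lam mu K z i)
      = - (\<Sum>k<K. lam * s k * (u (Suc k) - u k)\<^sup>2)"
    unfolding u_def by (rule mm1k_gen_dirichlet_form[where s=s and lam=lam and mu=mu, OF pos bal])
  ultimately have "(\<Sum>i\<le>K. z i / s i * mm1k_gen lam mu K z i) \<le> - (lam * m * energy)"
    by linarith
  also have "\<dots> \<le> - (lam * m / real K) * (\<Sum>i\<le>K. (z i)\<^sup>2 / s i)"
  proof (cases "K = 0")
    case False
    have "lam * m / real K * (\<Sum>i\<le>K. (z i)\<^sup>2 / s i) \<le> lam * m / real K * (real K * energy)"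
      using poincare lam m by (intro mult_left_mono) auto
    then show ?thesis using False by simp
  qed (simp add: energy_def)
  finally show ?thesis by (simp add: m_def)
qed

lemma mm1k_gen_ode_tendsto_zero:
  assumes lam: "0 < lam" and mu: "0 < mu" and K: "1 \<le> K"
    and deriv: "\<And>t i. 0 \<le> t \<Longrightarrow> i \<le> K \<Longrightarrow>
      ((\<lambda>t. z i t) has_real_derivative mm1k_gen lam mu K (\<lambda>j. z j t) i) (at t within {0..})"
    and centered: "(\<Sum>i\<le>K. z i 0) = 0" and "i \<le> K"
  shows "((\<lambda>t. z i t) \<longlongrightarrow> 0) at_top"
proof -
  define s where "s = mm1k_pi (lam / mu) K"
  have pos: "\<And>i. 0 < s i" using lam mu by (simp add: s_def mm1k_pi_pos)
  have bal: "\<And>i. lam * s i = mu * s (Suc i)" using mu by (simp add: s_def mm1k_pi_balance)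
  have total: "(\<Sum>i\<le>K. s i) = 1" using lam mu by (simp add: s_def sum_mm1k_pi)
  have conserved: "(\<Sum>i\<le>K. z i t) = 0" if "0 \<le> t" for t
    using mm1k_gen_ode_sum_const[OF deriv that] centered by simp
  define \<gamma> where "\<gamma> = lam * Min (s ` {..K}) / real K"
  have "0 < \<gamma>" using lam K pos by (simp add: \<gamma>_def)
  define W where "W t = (\<Sum>i\<le>K. (z i t)\<^sup>2 / s i)" for t
  have W_decay: "W t \<le> exp (- (2 * \<gamma>) * t) * W 0" if "0 \<le> t" for t
  proof (rule gronwall_deriv_le[OF _ _ that])
    fix t :: real assume "0 \<le> t"
    show "(W has_real_derivative 2 * (\<Sum>i\<le>K. z i t / s i * mm1k_gen lam mu K (\<lambda>j. z j t) i))
        (at t within {0..})"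
      unfolding W_def using \<open>0 \<le> t\<close> pos
      by (auto intro!: derivative_eq_intros deriv simp: sum_distrib_left mult_ac less_imp_neq[symmetric])
    show "2 * (\<Sum>i\<le>K. z i t / s i * mm1k_gen lam mu K (\<lambda>j. z j t) i) \<le> - (2 * \<gamma>) * W t"
      using mm1k_gen_spectral_gap[OF less_imp_le[OF lam] pos bal total conserved[OF \<open>0 \<le> t\<close>]]
      by (simp add: \<gamma>_def W_def)
  qed
  have bound: "norm (z i t) \<le> sqrt (s i * W 0 * exp (- (2 * \<gamma>) * t))" if "0 \<le> t" for t
  proof -
    have "0 \<le> (z j t)\<^sup>2 / s j" for j
      using pos[of j] by simp
    then have "(z i t)\<^sup>2 / s i \<le> W t"
      unfolding W_def using \<open>i \<le> K\<close> by (intro member_le_sum) auto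
    then have "(z i t)\<^sup>2 \<le> s i * W t" using pos[of i] by (simp add: field_simps)
    also have "\<dots> \<le> s i * W 0 * exp (- (2 * \<gamma>) * t)"
      using mult_left_mono[OF W_decay[OF that] less_imp_le[OF pos[of i]]] by (simp add: mult_ac)
    finally show ?thesis by (simp add: real_le_rsqrt)
  qed
  have "((\<lambda>t. sqrt (s i * W 0 * exp (- (2 * \<gamma>) * t))) \<longlongrightarrow> sqrt (s i * W 0 * 0)) at_top"
    using \<open>0 < \<gamma>\<close> by (intro tendsto_intros) real_asymp
  moreover have "eventually (\<lambda>t. norm (z i t) \<le> sqrt (s i * W 0 * exp (- (2 * \<gamma>) * t))) at_top"
    using bound by (rule eventually_at_top_linorderI)
  ultimately show ?thesis
    by (auto intro: Lim_null_comparison)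
qed

section \<open>The Poisson equation\<close>

text \<open>The departure rate: the server is busy with stationary probability 1 - \<pi>_0.\<close>

definition mm1k_throughput :: "real \<Rightarrow> real \<Rightarrow> nat \<Rightarrow> real" where
  "mm1k_throughput lam mu K = mu * (1 - mm1k_pi (lam / mu) K 0)"

text \<open>
  Obtained by solving for the flows: \<lambda> h_k - \<mu> h_(k+1) = (\<lambda> - \<theta>) (\<pi>_0 + ... + \<pi>_k), with h_0 = 0.
\<close>

definition mm1k_corrector :: "real \<Rightarrow> nat \<Rightarrow> nat \<Rightarrow> real" where
  "mm1k_corrector r K j =
     (if r = 1 then - (real j * (real j + 1)) / (2 * (real K + 1)\<^sup>2)
      else - (r ^ (K + 1)) / (1 - r ^ (K + 1))\<^sup>2 * ((real j * (r - 1) - 1) * r ^ j + 1))"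

lemma mm1k_gen_corrector_ne1:
  fixes r mu :: real
  assumes r: "0 < r" "r \<noteq> 1" and K: "1 \<le> K" and i: "i \<le> K"
  shows "mm1k_gen (r * mu) mu K (mm1k_corrector r K) i
    = mu * (1 - mm1k_pi r K 0) * mm1k_pi r K i - mm1k_D1 mu K (mm1k_pi r K) i"
proof -
  define a where "a = (1 - r) / (1 - r ^ (K + 1))"
  define C where "C = - (r ^ (K + 1)) / (1 - r ^ (K + 1))\<^sup>2"
  define h where "h = mm1k_corrector r K"
  have nz: "1 - r ^ (K + 1) \<noteq> 0"
    using power_Suc_neq_one[OF r, of K] by simp
  have pi: "mm1k_pi r K j = a * r ^ j" for j
    using r by (simp add: mm1k_pi_def a_def)
  have h: "h j = C * ((real j * (r - 1) - 1) * r ^ j + 1)" for j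
    using r by (simp add: h_def mm1k_corrector_def C_def)
  have interior: "C * (r - 1)\<^sup>2 = a * (1 - a - r)"
    unfolding a_def C_def using nz by (simp add: field_simps power2_eq_square) algebra
  have boundary: "C * (r - 1) * (1 - r ^ K) = (1 - a) * a * r ^ K"
    unfolding a_def C_def using nz by (simp add: field_simps power2_eq_square) algebra
  consider "i = 0" | k where "i = Suc k" "i < K" | k where "i = Suc k" "i = K"
    using i by (cases i; cases "i = K") auto
  then show ?thesis
  proof cases
    case 1
    have "mm1k_gen (r * mu) mu K h i = mu * (h 1 - r * h 0)"
      using 1 K by (simp add: mm1k_gen_def mm1k_D0_def mm1k_D1_def algebra_simps)
    also have "h 1 - r * h 0 = C * (r - 1)\<^sup>2" by (simp add: h power2_eq_square algebra_simps)
    finally show ?thesis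
      using 1 K by (simp add: interior pi h_def mm1k_D1_def algebra_simps)
  next
    case 2
    have "mm1k_gen (r * mu) mu K h i = mu * (r * h k + h (Suc (Suc k)) - (r + 1) * h (Suc k))"
      using 2 by (simp add: mm1k_gen_def mm1k_D0_def mm1k_D1_def algebra_simps)
    also have "r * h k + h (Suc (Suc k)) - (r + 1) * h (Suc k) = C * (r - 1)\<^sup>2 * r ^ i"
      using 2 by (simp add: h power2_eq_square algebra_simps)
    finally show ?thesis
      using 2 by (simp add: interior pi h_def mm1k_D1_def algebra_simps)
  next
    case 3
    have "mm1k_gen (r * mu) mu K h i = mu * (r * h k - h (Suc k))"
      using 3 by (simp add: mm1k_gen_def mm1k_D0_def mm1k_D1_def algebra_simps)
    also have "r * h k - h (Suc k) = C * (r - 1) * (1 - r ^ K)"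
      using 3 by (simp add: h algebra_simps)
    also have "mu * (C * (r - 1) * (1 - r ^ K)) = mu * (1 - a) * (a * r ^ K)"
      unfolding boundary by (simp add: algebra_simps)
    finally show ?thesis
      unfolding pi h_def using 3 by (simp add: mm1k_D1_def)
  qed
qed

lemma mm1k_gen_corrector_eq1:
  assumes K: "1 \<le> K" and i: "i \<le> K"
  shows "mm1k_gen mu mu K (mm1k_corrector 1 K) i
    = mu * (1 - mm1k_pi 1 K 0) * mm1k_pi 1 K i - mm1k_D1 mu K (mm1k_pi 1 K) i"
proof -
  define c where "c = real K + 1"
  have "c \<noteq> 0" by (simp add: c_def)
  have pi: "mm1k_pi 1 K j = 1 / c" for j by (simp add: mm1k_pi_def c_def)
  define h where "h = mm1k_corrector 1 K"
  have h: "h j = - (real j * (real j + 1)) / (2 * c\<^sup>2)" for j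
    by (simp add: h_def mm1k_corrector_def c_def)
  consider "i = 0" | k where "i = Suc k" "i < K" | k where "i = Suc k" "i = K"
    using i by (cases i; cases "i = K") auto
  then show ?thesis
  proof cases
    case 1
    then have "mm1k_gen mu mu K h i = mu * (h 1 - h 0)"
      using K by (simp add: mm1k_gen_def mm1k_D0_def mm1k_D1_def algebra_simps)
    also have "\<dots> = mu * (1 - 1 / c) * (1 / c) - mu * (1 / c)"
      using \<open>c \<noteq> 0\<close> by (simp add: h field_simps power2_eq_square)
    finally show ?thesis
      using 1 K by (simp add: pi h_def mm1k_D1_def)
  next
    case 2
    then have "mm1k_gen mu mu K h i = mu * (h k + h (Suc (Suc k)) - 2 * h (Suc k))"
      by (simp add: mm1k_gen_def mm1k_D0_def mm1k_D1_def algebra_simps)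
    also have "\<dots> = mu * (1 - 1 / c) * (1 / c) - mu * (1 / c)"
      using \<open>c \<noteq> 0\<close> by (simp add: h field_simps power2_eq_square)
    finally show ?thesis
      unfolding pi h_def using 2 by (simp add: mm1k_D1_def)
  next
    case 3
    then have "mm1k_gen mu mu K h i = mu * (h k - h (Suc k))"
      by (simp add: mm1k_gen_def mm1k_D0_def mm1k_D1_def algebra_simps)
    also have "\<dots> = mu * (1 - 1 / c) * (1 / c)"
    proof -
      have k: "real k = c - 2" using 3 by (simp add: c_def)
      show ?thesis using \<open>c \<noteq> 0\<close> by (simp add: h k field_simps power2_eq_square)
    qed
    finally show ?thesis
      unfolding pi h_def using 3 by (simp add: mm1k_D1_def)
  qed
qed

lemma mm1k_gen_corrector:
  assumes lam: "0 < lam" and mu: "0 < mu" and K: "1 \<le> K" and i: "i \<le> K"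
  shows "mm1k_gen lam mu K (mm1k_corrector (lam / mu) K) i
    = mm1k_throughput lam mu K * mm1k_pi (lam / mu) K i - mm1k_D1 mu K (mm1k_pi (lam / mu) K) i"
proof -
  have lam_eq: "lam = lam / mu * mu" using mu by simp
  show ?thesis
  proof (cases "lam / mu = 1")
    case True
    then have "lam = mu" using mu by simp
    then show ?thesis
      using mm1k_gen_corrector_eq1[OF K i, of mu] True by (simp add: mm1k_throughput_def)
  next
    case False
    then show ?thesis
      using mm1k_gen_corrector_ne1[OF _ False K i, of mu] lam mu
      by (subst lam_eq) (simp add: mm1k_throughput_def)
  qed
qed

lemma sum_atMost_of_nat_mult_power:
  fixes r :: real
  shows "(r - 1)\<^sup>2 * (\<Sum>i\<le>K. real i * r ^ i) = real K * r ^ (K + 2) - (real K + 1) * r ^ (K + 1) + r"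
  by (induction K) (simp_all add: power2_eq_square algebra_simps)

lemma sum_atMost_of_nat_sq_mult_power:
  fixes r :: real
  shows "(1 - r) ^ 3 * (\<Sum>i\<le>K. (real i)\<^sup>2 * r ^ i)
    = r * (1 + r - (real K + 1)\<^sup>2 * r ^ K + (2 * (real K)\<^sup>2 + 2 * real K - 1) * r ^ (K + 1)
        - (real K)\<^sup>2 * r ^ (K + 2))"
  by (induction K) (simp_all add: power2_eq_square power3_eq_cube algebra_simps)

lemma mm1k_cov_limit_rational_identity:
  fixes r x k S0 S1 S2 :: real
  assumes "r \<noteq> 1" and "r * x \<noteq> 1"
    and s0: "(r - 1) * S0 = r * x - 1"
    and s1: "(r - 1)\<^sup>2 * S1 = k * (r * r * x) - (k + 1) * (r * x) + r"
    and s2: "(1 - r) ^ 3 * S2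
      = r * (1 + r - (k + 1)\<^sup>2 * x + (2 * k\<^sup>2 + 2 * k - 1) * (r * x) - k\<^sup>2 * (r * r * x))"
  shows "- (r * x) / (1 - r * x)\<^sup>2 * (((r - 1) * S2 - S1 + k * (k + 1) / 2)
      - ((r - 1) * S1 - S0 + (k + 1)) * ((1 - r) / (1 - r * x) * S1))
    = r * x * (k\<^sup>2 * (r - 1)\<^sup>2 * (1 + 3 * (r * x)) - 2 * r * (x - 1) * (-2 + r + r * r * x)
        + k * (r - 1) * (-1 + 3 * r - 7 * (r * x) + 5 * (r * r * x)))
      / (2 * (r - 1)\<^sup>2 * (r * x - 1) ^ 3)"
    (is "?L = ?N / ?D")
proof -
  define q where "q = r * x - 1"
  have "q \<noteq> 0" using assms(2) by (simp add: q_def)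
  have "?D * ?L = - (r * x) * (2 * (r - 1)\<^sup>2 * q * ((r - 1) * S2 - S1) + k * (k + 1) * (r - 1)\<^sup>2 * q
      - 2 * (r - 1) ^ 3 * ((r - 1) * S1 - S0 + (k + 1)) * S1)"
  proof -
    have "1 - r * x = - q" "r * x = q + 1" by (simp_all add: q_def)
    then show ?thesis unfolding q_def[symmetric] using \<open>q \<noteq> 0\<close>
      by (simp add: field_simps power2_eq_square power3_eq_cube)
  qed
  also have "\<dots> = ?N"
    using s0 s1 s2 unfolding q_def by algebra
  finally show ?thesis
    using assms(1) \<open>q \<noteq> 0\<close> by (simp add: q_def eq_divide_eq mult.commute)
qed

lemma mm1k_corrector_cov_ne1:
  fixes r :: real
  assumes r: "0 < r" "r \<noteq> 1"
  shows "(\<Sum>i\<le>K. real i * mm1k_corrector r K i)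
      - (\<Sum>i\<le>K. mm1k_corrector r K i) * (\<Sum>i\<le>K. real i * mm1k_pi r K i)
    = mm1k_cov_limit r K"
proof -
  define x where "x = r ^ K"
  define C where "C = - (r * x) / (1 - r * x)\<^sup>2"
  define S0 where "S0 = (\<Sum>i\<le>K. r ^ i)"
  define S1 where "S1 = (\<Sum>i\<le>K. real i * r ^ i)"
  define S2 where "S2 = (\<Sum>i\<le>K. (real i)\<^sup>2 * r ^ i)"
  have pow: "r ^ (K + 1) = r * x" "r ^ (K + 2) = r * r * x" by (simp_all add: x_def)
  have rx: "r * x \<noteq> 1"
    using power_Suc_neq_one[OF r, of K] by (simp add: x_def)
  have h: "mm1k_corrector r K i = C * ((r - 1) * (real i * r ^ i) - r ^ i + 1)" for i
    using r by (simp add: mm1k_corrector_def C_def x_def algebra_simps)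
  have moment: "(\<Sum>i\<le>K. real i * mm1k_corrector r K i)
      = C * ((r - 1) * S2 - S1 + real K * (real K + 1) / 2)"
  proof -
    have "(\<Sum>i\<le>K. real i * mm1k_corrector r K i) = C * ((r - 1) * S2 - S1 + (\<Sum>i\<le>K. real i))"
      by (simp add: h S1_def S2_def power2_eq_square algebra_simps sum.distrib sum_subtractf
          sum_distrib_left)
    moreover have "(\<Sum>i\<le>K. real i) = real K * (real K + 1) / 2"
      by (induction K) (simp_all add: field_simps)
    ultimately show ?thesis by simp
  qed
  have total: "(\<Sum>i\<le>K. mm1k_corrector r K i) = C * ((r - 1) * S1 - S0 + (real K + 1))"
    by (simp add: h S0_def S1_def algebra_simps sum.distrib sum_subtractf sum_distrib_left)
  have mean: "(\<Sum>i\<le>K. real i * mm1k_pi r K i) = (1 - r) / (1 - r * x) * S1"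
    using r by (simp add: mm1k_pi_def S1_def x_def sum_distrib_left sum_divide_distrib mult_ac)
  have s0: "(r - 1) * S0 = r * x - 1"
    using r(2) by (simp add: S0_def sum_gp0 x_def field_simps)
  have s1: "(r - 1)\<^sup>2 * S1 = real K * (r * r * x) - (real K + 1) * (r * x) + r"
    unfolding S1_def sum_atMost_of_nat_mult_power pow ..
  have s2: "(1 - r) ^ 3 * S2 = r * (1 + r - (real K + 1)\<^sup>2 * x
      + (2 * (real K)\<^sup>2 + 2 * real K - 1) * (r * x) - (real K)\<^sup>2 * (r * r * x))"
    unfolding S2_def sum_atMost_of_nat_sq_mult_power pow x_def ..
  have "(\<Sum>i\<le>K. real i * mm1k_corrector r K i)
      - (\<Sum>i\<le>K. mm1k_corrector r K i) * (\<Sum>i\<le>K. real i * mm1k_pi r K i)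
    = C * (((r - 1) * S2 - S1 + real K * (real K + 1) / 2)
      - ((r - 1) * S1 - S0 + (real K + 1)) * ((1 - r) / (1 - r * x) * S1))"
    unfolding moment total mean by (simp only: right_diff_distrib mult.assoc)
  also have "\<dots> = r * x * ((real K)\<^sup>2 * (r - 1)\<^sup>2 * (1 + 3 * (r * x))
        - 2 * r * (x - 1) * (-2 + r + r * r * x)
        + real K * (r - 1) * (-1 + 3 * r - 7 * (r * x) + 5 * (r * r * x)))
      / (2 * (r - 1)\<^sup>2 * (r * x - 1) ^ 3)"
    unfolding C_def by (rule mm1k_cov_limit_rational_identity[OF r(2) rx s0 s1 s2])
  also have "\<dots> = mm1k_cov_limit r K"
    using r(2) unfolding mm1k_cov_limit_def pow x_def[symmetric] by simp
  finally show ?thesis .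
qed

lemma mm1k_corrector_cov_eq1:
  "(\<Sum>i\<le>K. real i * mm1k_corrector 1 K i)
      - (\<Sum>i\<le>K. mm1k_corrector 1 K i) * (\<Sum>i\<le>K. real i * mm1k_pi 1 K i)
    = mm1k_cov_limit 1 K"
proof -
  define k where "k = real K"
  define c where "c = k + 1"
  have "c \<noteq> 0" by (simp add: c_def k_def)
  have cubic: "(\<Sum>i\<le>K. real i * (real i * (real i + 1))) = k * c * (k + 2) * (3 * k + 1) / 12"
    unfolding c_def k_def by (induction K) (simp_all add: field_simps)
  have quadratic: "(\<Sum>i\<le>K. real i * (real i + 1)) = k * c * (k + 2) / 3"
    unfolding c_def k_def by (induction K) (simp_all add: field_simps)
  have linear: "(\<Sum>i\<le>K. real i) = k * c / 2"
    unfolding c_def k_def by (induction K) (simp_all add: field_simps)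
  have "(\<Sum>i\<le>K. real i * mm1k_corrector 1 K i)
      - (\<Sum>i\<le>K. mm1k_corrector 1 K i) * (\<Sum>i\<le>K. real i * mm1k_pi 1 K i)
    = - (k * c * (k + 2) * (3 * k + 1) / 12) / (2 * c\<^sup>2)
      - (- (k * c * (k + 2) / 3) / (2 * c\<^sup>2)) * (k * c / 2 / c)"
    unfolding cubic[symmetric] quadratic[symmetric] linear[symmetric]
    by (simp add: mm1k_corrector_def mm1k_pi_def c_def k_def sum_divide_distrib[symmetric] sum_negf)
  also have "\<dots> = k * (k + 2) * (2 * k - (3 * k + 1)) / (24 * c)"
    using \<open>c \<noteq> 0\<close> by (simp add: field_simps power2_eq_square)
  also have "2 * k - (3 * k + 1) = - c" by (simp add: c_def)
  finally show ?thesis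
    using \<open>c \<noteq> 0\<close> by (simp add: mm1k_cov_limit_def k_def)
qed

lemma mm1k_corrector_cov:
  "0 < r \<Longrightarrow> (\<Sum>i\<le>K. real i * mm1k_corrector r K i)
      - (\<Sum>i\<le>K. mm1k_corrector r K i) * (\<Sum>i\<le>K. real i * mm1k_pi r K i)
    = mm1k_cov_limit r K"
  using mm1k_corrector_cov_ne1 mm1k_corrector_cov_eq1 by (cases "r = 1") auto

section \<open>The joint law of queue length and departures\<close>

locale mm1k_forward =
  fixes lam mu :: real and K :: nat and p :: "real \<Rightarrow> nat \<Rightarrow> nat \<Rightarrow> real"
  assumes lam: "lam > 0" and mu: "mu > 0" and K: "K \<ge> 1"
    and init: "\<forall>i\<le>K. \<forall>n. p 0 i n = (if n = 0 then mm1k_pi (lam / mu) K i else 0)"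
    and forward: "\<forall>t\<ge>0. \<forall>i\<le>K. \<forall>n.
        ((\<lambda>s. p s i n) has_real_derivative mm1k_rhs lam mu K p t i n) (at t within {0..})"
begin

definition level_energy :: "nat \<Rightarrow> real \<Rightarrow> real" where
  "level_energy n t = (\<Sum>i\<le>K. (p t i n)\<^sup>2)"

lemma level_energy_nonneg: "0 \<le> level_energy n t"
  by (simp add: level_energy_def sum_nonneg)

lemma has_derivative_level_energy:
  assumes "0 \<le> t"
  shows "(level_energy n has_real_derivative 2 * (\<Sum>i\<le>K. p t i n * mm1k_rhs lam mu K p t i n))
    (at t within {0..})"
  unfolding level_energy_def using assms forward
  by (auto intro!: derivative_eq_intros simp: sum_distrib_left mult_ac)

lemma level_energy_growth:
  "2 * (\<Sum>i\<le>K. p t i n * mm1k_rhs lam mu K p t i n)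
    \<le> (2 * lam + mu) * level_energy n t + (if n = 0 then 0 else mu * level_energy (n - 1) t)"
proof -
  define w where "w j = (if 1 \<le> n then p t j (n - 1) else 0)" for j
  have "mm1k_rhs lam mu K p t i n = mm1k_D0 lam mu K (\<lambda>j. p t j n) i + mm1k_D1 mu K w i" for i
    by (simp add: mm1k_rhs_eq_D0_D1 w_def mm1k_D1_def)
  moreover have "mu * (\<Sum>i\<le>K. (w i)\<^sup>2) = (if n = 0 then 0 else mu * level_energy (n - 1) t)"
    by (simp add: w_def level_energy_def)
  ultimately show ?thesis
    using mm1k_energy_ineq[OF less_imp_le[OF lam] less_imp_le[OF mu], where K=K and v="\<lambda>j. p t j n" and w=w]
    by (simp add: level_energy_def)
qed

lemma level_energy_bound:
  assumes "0 \<le> t"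
  shows "exp (- (2 * lam + mu) * t) * level_energy n t \<le> level_energy 0 0 * (mu * t) ^ n / fact n"
  using assms
proof (induction n arbitrary: t)
  define c where "c = 2 * lam + mu"
  define rate where "rate n s = exp (- c * s)
    * (2 * (\<Sum>i\<le>K. p s i n * mm1k_rhs lam mu K p s i n) - c * level_energy n s)" for n s
  have weighted_deriv: "((\<lambda>s. exp (- c * s) * level_energy n s) has_real_derivative rate n s)
      (at s within {0..})" if "0 \<le> s" for n s
    unfolding rate_def
    by (rule derivative_eq_intros has_derivative_level_energy[OF that] refl | simp add: algebra_simps)+
  have rate_le: "rate n s \<le> (if n = 0 then 0 else mu * (exp (- c * s) * level_energy (n - 1) s))" for n s
    using mult_left_mono[OF _ exp_ge_zero[of "- c * s"], of _
      "(if n = 0 then 0 else mu * level_energy (n - 1) s)"] level_energy_growth[of s n]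
    by (cases "n = 0") (simp_all add: rate_def c_def mult.left_commute)
  {
    case 0
    have "exp (- c * t) * level_energy 0 t - exp (- c * 0) * level_energy 0 0 \<le> 0 - 0"
      using weighted_deriv rate_le[of 0]
      by (intro increment_le_of_deriv_le[OF "0.prems", where g'="\<lambda>_. 0"]) auto
    then show ?case by (simp add: c_def)
  next
    case (Suc m)
    define bound where "bound s = level_energy 0 0 * (mu * s) ^ Suc m / fact (Suc m)" for s
    have bound_deriv: "(bound has_real_derivative mu * (level_energy 0 0 * (mu * s) ^ m / fact m))
        (at s within {0..})" for s
    proof -
      have "((\<lambda>s. (mu * s) ^ Suc m) has_real_derivative real (Suc m) * (mu * (mu * s) ^ m))
          (at s within {0..})"
        by (rule derivative_eq_intros refl | simp)+
      then have "(bound has_real_derivative level_energy 0 0 * (real (Suc m) * (mu * (mu * s) ^ m))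
          / fact (Suc m)) (at s within {0..})"
        unfolding bound_def by (intro DERIV_cdivide DERIV_cmult)
      then show ?thesis by (simp add: fact_Suc mult_ac del: of_nat_Suc)
    qed
    have "exp (- c * t) * level_energy (Suc m) t - exp (- c * 0) * level_energy (Suc m) 0
        \<le> bound t - bound 0"
    proof (rule increment_le_of_deriv_le[OF Suc.prems weighted_deriv bound_deriv])
      fix s :: real assume "0 \<le> s" "s \<le> t"
      show "rate (Suc m) s \<le> mu * (level_energy 0 0 * (mu * s) ^ m / fact m)"
        using rate_le[of "Suc m" s] mult_left_mono[OF Suc.IH[OF \<open>0 \<le> s\<close>] less_imp_le[OF mu]]
        by (simp add: c_def)
    qed
    moreover have "level_energy (Suc m) 0 = 0"
      using init by (simp add: level_energy_def)
    ultimately show ?case by (simp add: c_def bound_def)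
  }
qed

text \<open>
  The bound |x| \<le> (4^n x^2 + 4^(-n)) / 2 turns the estimate of the squared level energy into a
  majorant that stays summable after multiplication by n.
\<close>

definition majorant :: "real \<Rightarrow> nat \<Rightarrow> real" where
  "majorant T n = (exp ((2 * lam + mu) * T) * level_energy 0 0 * (4 * mu * T) ^ n / fact n + (1 / 4) ^ n) / 2"

lemma abs_p_le_majorant:
  assumes "0 \<le> t" "t \<le> T" "i \<le> K"
  shows "\<bar>p t i n\<bar> \<le> majorant T n"
proof -
  define A where "A = exp ((2 * lam + mu) * T) * level_energy 0 0"
  have "(p t i n)\<^sup>2 \<le> level_energy n t"
    unfolding level_energy_def using assms(3) by (intro member_le_sum) auto
  also have "\<dots> = exp ((2 * lam + mu) * t) * (exp (- (2 * lam + mu) * t) * level_energy n t)"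
    by (simp only: mult_minus_left mult.assoc[symmetric] exp_minus_inverse mult_1_left)
  also have "\<dots> \<le> exp ((2 * lam + mu) * t) * (level_energy 0 0 * (mu * t) ^ n / fact n)"
    by (rule mult_left_mono[OF level_energy_bound[OF assms(1)]]) simp
  also have "\<dots> \<le> A * (mu * T) ^ n / fact n"
    unfolding A_def mult.assoc times_divide_eq_right[symmetric]
    using assms lam mu level_energy_nonneg
    by (intro mult_mono divide_right_mono power_mono mult_left_mono) auto
  finally have sq: "(p t i n)\<^sup>2 \<le> A * (mu * T) ^ n / fact n" .
  have "\<bar>p t i n\<bar> \<le> (4 ^ n * (p t i n)\<^sup>2 + 1 / 4 ^ n) / 2"
    by (rule abs_le_AM_GM) simp
  also have "\<dots> \<le> (4 ^ n * (A * (mu * T) ^ n / fact n) + 1 / 4 ^ n) / 2"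
    using sq by (intro divide_right_mono add_right_mono mult_left_mono) auto
  also have "\<dots> = majorant T n"
    by (simp add: majorant_def A_def power_mult_distrib power_one_over mult_ac)
  finally show ?thesis .
qed

lemma majorant_nonneg: "0 \<le> T \<Longrightarrow> 0 \<le> majorant T n"
  using mu level_energy_nonneg[of 0 0] by (simp add: majorant_def)

lemma summable_majorant: "0 \<le> T \<Longrightarrow> summable (\<lambda>n. real (Suc n) * majorant T n)"
  unfolding majorant_def using mu level_energy_nonneg[of 0 0]
  by (intro summable_Suc_times_exp_majorant) auto

lemma abs_rhs_le_majorant:
  assumes "0 \<le> t" "t \<le> T" "i \<le> K"
  shows "\<bar>mm1k_rhs lam mu K p t i n\<bar> \<le> (2 * lam + 2 * mu) * (majorant T n + majorant T (n - 1))"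
proof -
  define arrival where "arrival = (if 1 \<le> i then lam * p t (i - 1) n else 0)"
  define service where "service = (if i + 1 \<le> K \<and> 1 \<le> n then mu * p t (i + 1) (n - 1) else 0)"
  define outflow where "outflow = ((if i < K then lam else 0) + (if 0 < i then mu else 0)) * p t i n"
  have p: "\<And>j m. j \<le> K \<Longrightarrow> \<bar>p t j m\<bar> \<le> majorant T m"
    using abs_p_le_majorant assms(1,2) by blast
  have m: "0 \<le> majorant T m" for m
    using majorant_nonneg assms by auto
  have "\<bar>arrival\<bar> \<le> lam * majorant T n"
    using mult_left_mono[OF p[of "i - 1" n] less_imp_le[OF lam]] assms lam m[of n]
    by (auto simp: arrival_def abs_mult)
  moreover have "\<bar>service\<bar> \<le> mu * majorant T (n - 1)"
    using mult_left_mono[OF p[of "i + 1" "n - 1"] less_imp_le[OF mu]] mu m[of "n - 1"]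
    by (auto simp: service_def abs_mult)
  moreover have "\<bar>outflow\<bar> \<le> (lam + mu) * majorant T n"
    unfolding outflow_def abs_mult using p[of i n] assms lam mu by (intro mult_mono) auto
  moreover have "0 \<le> mu * majorant T n" "0 \<le> lam * majorant T (n - 1)" "0 \<le> mu * majorant T (n - 1)"
    using lam mu m by auto
  moreover have "(2 * lam + 2 * mu) * (majorant T n + majorant T (n - 1))
      = lam * majorant T n + mu * majorant T (n - 1) + (lam + mu) * majorant T n
        + (mu * majorant T n + 2 * (lam * majorant T (n - 1)) + mu * majorant T (n - 1))"
    by (simp add: algebra_simps)
  moreover have "\<bar>arrival + service - outflow\<bar> \<le> \<bar>arrival\<bar> + \<bar>service\<bar> + \<bar>outflow\<bar>"
    by linarith
  ultimately have "\<bar>arrival + service - outflow\<bar> \<le> (2 * lam + 2 * mu) * (majorant T n + majorant T (n - 1))"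
    by linarith
  then show ?thesis
    by (simp add: mm1k_rhs_def arrival_def service_def outflow_def)
qed

definition rhs_majorant :: "real \<Rightarrow> nat \<Rightarrow> real" where
  "rhs_majorant T n = (2 * lam + 2 * mu) * (real (Suc n) * majorant T n + real (Suc n) * majorant T (n - 1))"

lemma summable_rhs_majorant:
  assumes "0 \<le> T"
  shows "summable (rhs_majorant T)"
proof -
  have bound: "norm (real (Suc (Suc n)) * majorant T n) \<le> 2 * (real (Suc n) * majorant T n)" for n
  proof -
    have "real (Suc (Suc n)) * majorant T n \<le> (2 * real (Suc n)) * majorant T n"
      using majorant_nonneg[OF assms] by (intro mult_right_mono) auto
    then show ?thesis using majorant_nonneg[OF assms, of n] by (simp add: algebra_simps)
  qed
  have "summable (\<lambda>n. 2 * (real (Suc n) * majorant T n))"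
    using summable_majorant[OF assms] by (rule summable_mult)
  then have "summable (\<lambda>n. real (Suc (Suc n)) * majorant T n)"
    by (rule summable_comparison_test'[where N=0]) (rule bound)
  then have "summable (\<lambda>n. real (Suc n) * majorant T (n - 1))"
    by (subst summable_Suc_iff[symmetric]) simp
  then show ?thesis
    unfolding rhs_majorant_def[abs_def] by (intro summable_mult summable_add summable_majorant[OF assms])
qed

lemma abs_rhs_le_rhs_majorant:
  assumes "0 \<le> t" "t \<le> T" "i \<le> K"
  shows "\<bar>mm1k_rhs lam mu K p t i n\<bar> \<le> rhs_majorant T n"
    and "\<bar>real n * mm1k_rhs lam mu K p t i n\<bar> \<le> rhs_majorant T n"
proof -
  define b where "b = (2 * lam + 2 * mu) * (majorant T n + majorant T (n - 1))"
  have bound: "\<bar>mm1k_rhs lam mu K p t i n\<bar> \<le> b"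
    unfolding b_def by (rule abs_rhs_le_majorant[OF assms])
  have "0 \<le> b"
    using lam mu majorant_nonneg assms by (simp add: b_def)
  have "rhs_majorant T n = real (Suc n) * b"
    by (simp add: rhs_majorant_def b_def algebra_simps)
  moreover have "\<bar>real n * mm1k_rhs lam mu K p t i n\<bar> \<le> real (Suc n) * b"
    using mult_mono[OF _ bound, of "real n" "real (Suc n)"] \<open>0 \<le> b\<close> by (simp add: abs_mult)
  moreover have "b \<le> real (Suc n) * b"
    using mult_right_mono[OF _ \<open>0 \<le> b\<close>, of 1 "real (Suc n)"] by simp
  ultimately show "\<bar>mm1k_rhs lam mu K p t i n\<bar> \<le> rhs_majorant T n"
    and "\<bar>real n * mm1k_rhs lam mu K p t i n\<bar> \<le> rhs_majorant T n"
    using bound by linarith+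
qed

definition marginal :: "nat \<Rightarrow> real \<Rightarrow> real" where
  "marginal i t = (\<Sum>n. p t i n)"

definition moment :: "nat \<Rightarrow> real \<Rightarrow> real" where
  "moment i t = (\<Sum>n. real n * p t i n)"

lemma marginal_series:
  assumes "0 \<le> t" "i \<le> K"
  shows "(\<lambda>n. p t i n) sums marginal i t"
    and "((\<lambda>t. marginal i t) has_real_derivative (\<Sum>n. mm1k_rhs lam mu K p t i n)) (at t within {0..})"
proof -
  have deriv: "\<And>n s. 0 \<le> s \<Longrightarrow>
      ((\<lambda>t. p t i n) has_real_derivative mm1k_rhs lam mu K p s i n) (at s within {0..})"
    using forward assms(2) by blast
  have "(\<lambda>n. p 0 i n) = (\<lambda>n. if n = 0 then mm1k_pi (lam / mu) K i else 0)"
    using init assms(2) by auto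
  then have "summable (\<lambda>n. p 0 i n)" by simp
  note termwise = termwise_has_real_derivative_suminf[OF deriv summable_rhs_majorant
      abs_rhs_le_rhs_majorant(1)[OF _ _ assms(2)] this assms(1)]
  show "(\<lambda>n. p t i n) sums marginal i t"
    unfolding marginal_def using termwise(1) by (rule summable_sums)
  show "((\<lambda>t. marginal i t) has_real_derivative (\<Sum>n. mm1k_rhs lam mu K p t i n)) (at t within {0..})"
    unfolding marginal_def by (rule termwise(2))
qed

lemma moment_series:
  assumes "0 \<le> t" "i \<le> K"
  shows "(\<lambda>n. real n * p t i n) sums moment i t"
    and "((\<lambda>t. moment i t) has_real_derivative (\<Sum>n. real n * mm1k_rhs lam mu K p t i n))
      (at t within {0..})"
proof -
  have deriv: "\<And>n s. 0 \<le> s \<Longrightarrow>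
      ((\<lambda>t. real n * p t i n) has_real_derivative real n * mm1k_rhs lam mu K p s i n) (at s within {0..})"
    using forward assms(2) by (simp add: DERIV_cmult)
  have "(\<lambda>n. real n * p 0 i n) = (\<lambda>n. 0)"
    using init assms(2) by auto
  then have "summable (\<lambda>n. real n * p 0 i n)" by simp
  note termwise = termwise_has_real_derivative_suminf[OF deriv summable_rhs_majorant
      abs_rhs_le_rhs_majorant(2)[OF _ _ assms(2)] this assms(1)]
  show "(\<lambda>n. real n * p t i n) sums moment i t"
    unfolding moment_def using termwise(1) by (rule summable_sums)
  show "((\<lambda>t. moment i t) has_real_derivative (\<Sum>n. real n * mm1k_rhs lam mu K p t i n))
      (at t within {0..})"
    unfolding moment_def by (rule termwise(2))
qed

lemma rhs_sums:
  assumes "0 \<le> t" "i \<le> K"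
  shows "(\<lambda>n. mm1k_rhs lam mu K p t i n) sums mm1k_gen lam mu K (\<lambda>j. marginal j t) i"
proof -
  have "(\<lambda>n. mm1k_D0 lam mu K (\<lambda>j. p t j n) i
      + (if 1 \<le> n then mm1k_D1 mu K (\<lambda>j. p t j (n - 1)) i else 0))
    sums (mm1k_D0 lam mu K (\<lambda>j. marginal j t) i + mm1k_D1 mu K (\<lambda>j. marginal j t) i)"
    using marginal_series(1)[OF assms(1)] assms(2)
    by (intro sums_add mm1k_D0_sums sums_delay[where f="\<lambda>m. mm1k_D1 mu K (\<lambda>j. p t j m) i"]
        mm1k_D1_sums) auto
  then show ?thesis by (simp add: mm1k_rhs_eq_D0_D1 mm1k_gen_def)
qed

lemma weighted_rhs_sums:
  assumes "0 \<le> t" "i \<le> K"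
  shows "(\<lambda>n. real n * mm1k_rhs lam mu K p t i n)
    sums (mm1k_gen lam mu K (\<lambda>j. moment j t) i + mm1k_D1 mu K (\<lambda>j. marginal j t) i)"
proof -
  have "(\<lambda>m. real m * mm1k_D1 mu K (\<lambda>j. p t j m) i) sums mm1k_D1 mu K (\<lambda>j. moment j t) i"
    using mm1k_D1_sums[where v="\<lambda>m j. real m * p t j m"] moment_series(1)[OF assms(1)]
    by (simp add: mm1k_D1_scale)
  then have "(\<lambda>n. mm1k_D0 lam mu K (\<lambda>j. real n * p t j n) i
      + real n * (if 1 \<le> n then mm1k_D1 mu K (\<lambda>j. p t j (n - 1)) i else 0))
    sums (mm1k_D0 lam mu K (\<lambda>j. moment j t) i
      + (mm1k_D1 mu K (\<lambda>j. moment j t) i + mm1k_D1 mu K (\<lambda>j. marginal j t) i))"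
    using marginal_series(1)[OF assms(1)] moment_series(1)[OF assms(1)] assms(2)
    by (intro sums_add mm1k_D0_sums sums_of_nat_mult_delay mm1k_D1_sums) auto
  then show ?thesis
    by (simp add: mm1k_rhs_eq_D0_D1 mm1k_gen_def mm1k_D0_scale distrib_left add_ac)
qed

lemma has_derivative_marginal:
  assumes "0 \<le> t" "i \<le> K"
  shows "((\<lambda>t. marginal i t) has_real_derivative mm1k_gen lam mu K (\<lambda>j. marginal j t) i)
    (at t within {0..})"
  using marginal_series(2)[OF assms] sums_unique[OF rhs_sums[OF assms]] by simp

lemma has_derivative_moment:
  assumes "0 \<le> t" "i \<le> K"
  shows "((\<lambda>t. moment i t) has_real_derivative
      mm1k_gen lam mu K (\<lambda>j. moment j t) i + mm1k_D1 mu K (\<lambda>j. marginal j t) i) (at t within {0..})"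
  using moment_series(2)[OF assms] sums_unique[OF weighted_rhs_sums[OF assms]] by simp

lemma marginal_eq_pi:
  assumes "0 \<le> t" "i \<le> K"
  shows "marginal i t = mm1k_pi (lam / mu) K i"
proof -
  define \<pi> where "\<pi> = mm1k_pi (lam / mu) K"
  have "marginal i t - \<pi> i = 0"
  proof (rule mm1k_gen_ode_zero[where y="\<lambda>i t. marginal i t - \<pi> i"])
    fix s :: real and j :: nat assume "0 \<le> s" "j \<le> K"
    have "mm1k_gen lam mu K (\<lambda>j. marginal j s - \<pi> j) j = mm1k_gen lam mu K (\<lambda>j. marginal j s) j"
      using mm1k_gen_pi[of mu j K lam] mu \<open>j \<le> K\<close> by (simp add: mm1k_gen_diff \<pi>_def)
    then show "((\<lambda>t. marginal j t - \<pi> j) has_real_derivative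
        mm1k_gen lam mu K (\<lambda>j. marginal j s - \<pi> j) j) (at s within {0..})"
      using has_derivative_marginal[OF \<open>0 \<le> s\<close> \<open>j \<le> K\<close>] by (auto intro: derivative_eq_intros)
  next
    fix j assume "j \<le> K"
    then have "(\<lambda>n. p 0 j n) = (\<lambda>n. if n = 0 then \<pi> j else 0)"
      using init by (auto simp: \<pi>_def)
    then show "marginal j 0 - \<pi> j = 0"
      using sums_single[of 0 "\<lambda>_. \<pi> j"] by (simp add: marginal_def sums_iff)
  qed (use assms lam mu in auto)
  then show ?thesis by (simp add: \<pi>_def)
qed

lemma moment_0:
  assumes "i \<le> K"
  shows "moment i 0 = 0"
proof -
  have "(\<lambda>n. real n * p 0 i n) = (\<lambda>n. 0)"
    using init assms by auto
  then show ?thesis by (simp add: moment_def)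
qed

lemma mm1k_cov_eq_moments:
  assumes "0 \<le> t"
  shows "mm1k_cov K p t = (\<Sum>i\<le>K. real i * moment i t)
    - (\<Sum>i\<le>K. moment i t) * (\<Sum>i\<le>K. real i * mm1k_pi (lam / mu) K i)"
proof -
  have "(\<lambda>n. \<Sum>i\<le>K. real i * p t i n) sums (\<Sum>i\<le>K. real i * marginal i t)"
    using marginal_series(1)[OF assms] by (intro sums_sum sums_mult) auto
  then have "mm1k_EQ K p t = (\<Sum>i\<le>K. real i * mm1k_pi (lam / mu) K i)"
    using marginal_eq_pi[OF assms] by (simp add: mm1k_EQ_def sums_iff)
  moreover have "(\<lambda>n. \<Sum>i\<le>K. real n * p t i n) sums (\<Sum>i\<le>K. moment i t)"
    using moment_series(1)[OF assms] by (intro sums_sum) auto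
  then have "mm1k_ED K p t = (\<Sum>i\<le>K. moment i t)"
    by (simp add: mm1k_ED_def sums_iff)
  moreover have "(\<lambda>n. \<Sum>i\<le>K. real i * (real n * p t i n)) sums (\<Sum>i\<le>K. real i * moment i t)"
    using moment_series(1)[OF assms] by (intro sums_sum sums_mult) auto
  then have "mm1k_EDQ K p t = (\<Sum>i\<le>K. real i * moment i t)"
    by (simp add: mm1k_EDQ_def sums_iff mult_ac)
  ultimately show ?thesis by (simp add: mm1k_cov_def)
qed

definition centred_moment :: "(nat \<Rightarrow> real) \<Rightarrow> nat \<Rightarrow> real \<Rightarrow> real" where
  "centred_moment h i t = moment i t
     - (mm1k_throughput lam mu K * t - (\<Sum>j\<le>K. h j)) * mm1k_pi (lam / mu) K i - h i"

lemma has_derivative_centred_moment: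
  assumes poisson: "\<And>i. i \<le> K \<Longrightarrow> mm1k_gen lam mu K h i
    = mm1k_throughput lam mu K * mm1k_pi (lam / mu) K i - mm1k_D1 mu K (mm1k_pi (lam / mu) K) i"
    and "0 \<le> t" "i \<le> K"
  shows "((\<lambda>t. centred_moment h i t) has_real_derivative
    mm1k_gen lam mu K (\<lambda>j. centred_moment h j t) i) (at t within {0..})"
proof -
  define \<pi> where "\<pi> = mm1k_pi (lam / mu) K"
  define \<theta> where "\<theta> = mm1k_throughput lam mu K"
  have "mm1k_D1 mu K (\<lambda>j. marginal j t) i = mm1k_D1 mu K \<pi> i"
    using marginal_eq_pi[OF assms(2)] by (simp add: mm1k_D1_def \<pi>_def)
  then have "((\<lambda>t. centred_moment h i t) has_real_derivative
      mm1k_gen lam mu K (\<lambda>j. moment j t) i + mm1k_D1 mu K \<pi> i - \<theta> * \<pi> i) (at t within {0..})"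
    unfolding centred_moment_def \<pi>_def \<theta>_def using has_derivative_moment[OF assms(2,3)]
    by (auto intro!: derivative_eq_intros)
  moreover have "mm1k_gen lam mu K (\<lambda>j. centred_moment h j t) i
      = mm1k_gen lam mu K (\<lambda>j. moment j t) i + mm1k_D1 mu K \<pi> i - \<theta> * \<pi> i"
    using poisson[OF assms(3)] mm1k_gen_pi[of mu i K lam] mu assms(3)
    by (simp add: centred_moment_def mm1k_gen_diff mm1k_gen_mult \<pi>_def \<theta>_def)
  ultimately show ?thesis by simp
qed

lemma sum_centred_moment_0: "(\<Sum>i\<le>K. centred_moment h i 0) = 0"
  using lam mu
  by (simp add: centred_moment_def moment_0 sum_subtractf sum_distrib_left[symmetric] sum_mm1k_pi)

lemma mm1k_cov_eq_centred_moment: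
  assumes "0 \<le> t"
  shows "mm1k_cov K p t = (\<Sum>i\<le>K. real i * centred_moment h i t)
      - (\<Sum>i\<le>K. centred_moment h i t) * (\<Sum>i\<le>K. real i * mm1k_pi (lam / mu) K i)
    + ((\<Sum>i\<le>K. real i * h i) - (\<Sum>i\<le>K. h i) * (\<Sum>i\<le>K. real i * mm1k_pi (lam / mu) K i))"
proof -
  define \<pi> where "\<pi> = mm1k_pi (lam / mu) K"
  define \<kappa> where "\<kappa> = mm1k_throughput lam mu K * t - (\<Sum>j\<le>K. h j)"
  have moment: "moment i t = centred_moment h i t + \<kappa> * \<pi> i + h i" for i
    by (simp add: centred_moment_def \<kappa>_def \<pi>_def)
  have "(\<Sum>i\<le>K. real i * moment i t) = (\<Sum>i\<le>K. real i * centred_moment h i t)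
      + \<kappa> * (\<Sum>i\<le>K. real i * \<pi> i) + (\<Sum>i\<le>K. real i * h i)"
    by (simp add: moment algebra_simps sum.distrib sum_distrib_left)
  moreover have "(\<Sum>i\<le>K. moment i t) = (\<Sum>i\<le>K. centred_moment h i t) + \<kappa> + (\<Sum>i\<le>K. h i)"
    using lam mu by (simp add: moment sum.distrib sum_distrib_left[symmetric] \<pi>_def sum_mm1k_pi)
  ultimately show ?thesis
    by (simp add: mm1k_cov_eq_moments[OF assms] \<pi>_def algebra_simps)
qed

lemma mm1k_cov_tendsto_of_corrector:
  assumes poisson: "\<And>i. i \<le> K \<Longrightarrow> mm1k_gen lam mu K h i
    = mm1k_throughput lam mu K * mm1k_pi (lam / mu) K i - mm1k_D1 mu K (mm1k_pi (lam / mu) K) i"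
  shows "((\<lambda>t. mm1k_cov K p t) \<longlongrightarrow>
    (\<Sum>i\<le>K. real i * h i) - (\<Sum>i\<le>K. h i) * (\<Sum>i\<le>K. real i * mm1k_pi (lam / mu) K i)) at_top"
    (is "(_ \<longlongrightarrow> ?L) at_top")
proof -
  define EQ where "EQ = (\<Sum>i\<le>K. real i * mm1k_pi (lam / mu) K i)"
  have "((\<lambda>t. centred_moment h i t) \<longlongrightarrow> 0) at_top" if "i \<le> K" for i
    using mm1k_gen_ode_tendsto_zero[OF lam mu K has_derivative_centred_moment[OF poisson]
        sum_centred_moment_0 that] .
  then have "((\<lambda>t. (\<Sum>i\<le>K. real i * centred_moment h i t) - (\<Sum>i\<le>K. centred_moment h i t) * EQ + ?L)
      \<longlongrightarrow> (\<Sum>i\<le>K. real i * 0) - (\<Sum>i\<le>K. 0) * EQ + ?L) at_top"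
    by (intro tendsto_intros) auto
  moreover have "eventually (\<lambda>t. (\<Sum>i\<le>K. real i * centred_moment h i t)
      - (\<Sum>i\<le>K. centred_moment h i t) * EQ + ?L = mm1k_cov K p t) at_top"
    using mm1k_cov_eq_centred_moment by (intro eventually_at_top_linorderI[of 0]) (simp add: EQ_def)
  ultimately show ?thesis
    by (auto intro: Lim_transform_eventually)
qed

end

theorem mainTheorem6:
  fixes lam mu :: real and K :: nat and p :: "real \<Rightarrow> nat \<Rightarrow> nat \<Rightarrow> real"
  assumes "lam > 0" and "mu > 0" and "K \<ge> 1"
    and init: "\<forall>i\<le>K. \<forall>n. p 0 i n = (if n = 0 then mm1k_pi (lam / mu) K i else 0)"
    and forward: "\<forall>t\<ge>0. \<forall>i\<le>K. \<forall>n.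
        ((\<lambda>s. p s i n) has_real_derivative mm1k_rhs lam mu K p t i n) (at t within {0..})"
  shows "((\<lambda>t. mm1k_cov K p t) \<longlongrightarrow> mm1k_cov_limit (lam / mu) K) at_top"
proof -
  interpret mm1k_forward lam mu K p
    using assms by unfold_locales
  have "((\<lambda>t. mm1k_cov K p t) \<longlongrightarrow> (\<Sum>i\<le>K. real i * mm1k_corrector (lam / mu) K i)
      - (\<Sum>i\<le>K. mm1k_corrector (lam / mu) K i) * (\<Sum>i\<le>K. real i * mm1k_pi (lam / mu) K i)) at_top"
    using assms(1-3) by (intro mm1k_cov_tendsto_of_corrector mm1k_gen_corrector)
  then show ?thesis
    using assms(1,2) by (simp add: mm1k_corrector_cov)
qed

end
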